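(* Let $X$ be an absolutely continuous non-negative random variable whose density $f$ is supported on $[0,\nu]$ with $\nu<\infty$, and let $\mu=\mathrm{E}(X)$, assumed to be positive. Then $$H^w\le \mu\log\frac{\nu^2}{2\mu}.$$ Moreover, equality holds if $X$ is uniformly distributed on $[0,\nu]$.
   Context: The weighted entropy of $X$ with density $f$ is $H^w=-\mathrm{E}[X\log f(X)]=-\int_0^{\infty}x\,f(x)\log f(x)\,dx$, with $\log$ the natural logarithm. *)

theory Defs
  imports "HOL-Analysis.Analysis"
begin

definition is_density :: "(real \<Rightarrow> real) \<Rightarrow> bool" where
  "is_density f \<longleftrightarrow> f \<in> borel_measurable lborel \<and> (\<forall>x. 0 \<le> f x) \<and>
     integrable lborel f \<and> (\<integral>x. f x \<partial>lborel) = 1"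

definition dens_mean :: "(real \<Rightarrow> real) \<Rightarrow> real" where
  "dens_mean f = (\<integral>x. x * f x \<partial>lborel)"

text \<open>Weighted entropy H^w = - E[X log f(X)] = - int x f(x) log f(x) dx
  (natural logarithm; convention 0 log 0 = 0, which matches ln 0 = 0).\<close>
definition weighted_entropy :: "(real \<Rightarrow> real) \<Rightarrow> real" where
  "weighted_entropy f = - (\<integral>x. x * f x * ln (f x) \<partial>lborel)"

end

theory Submission
  imports Defs
begin

text \<open>
  Gibbs' inequality against the constant \<open>c\<close> on \<open>[0, \<nu>]\<close>: for every \<open>c > 0\<close>,
  \<open>ln t \<le> t - 1\<close> at \<open>t = c / f(x)\<close>, weighted by \<open>x f(x)\<close> and integrated over \<open>[0, \<nu>]\<close>,
  gives \<open>H\<^sup>w \<le> c \<nu>\<^sup>2/2 - \<mu> (1 + ln c)\<close>. The right-hand side is minimal at \<open>c = 2\<mu>/\<nu>\<^sup>2\<close>,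
  where it equals \<open>\<mu> ln (\<nu>\<^sup>2/(2\<mu>))\<close>. For the uniform density (\<open>\<mu> = \<nu>/2\<close>, \<open>c = 1/\<nu> = f\<close>)
  Gibbs' inequality is an equality and both sides equal \<open>(\<nu>/2) ln \<nu>\<close>.
\<close>

lemma
  fixes v :: real
  assumes "0 \<le> v"
  shows integrable_indicator_times_id: "integrable lborel (\<lambda>x. indicator {0..v} x *\<^sub>R x)"
    and integral_indicator_times_id: "(\<integral>x. indicator {0..v} x *\<^sub>R x \<partial>lborel) = v\<^sup>2 / 2"
proof -
  show "integrable lborel (\<lambda>x. indicator {0..v} x *\<^sub>R x)"
    using borel_integrable_atLeastAtMost[of 0 v "\<lambda>x. x"] by (simp add: mult.commute)
  have "(\<integral>x. indicator {0..v} x *\<^sub>R x \<partial>lborel) = (\<lambda>x. x\<^sup>2/2) v - (\<lambda>x. x\<^sup>2/2) 0"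
    by (rule integral_FTC_atLeastAtMost[OF assms])
       (auto intro!: derivative_eq_intros continuous_intros
             simp: has_real_derivative_iff_has_vector_derivative[symmetric])
  then show "(\<integral>x. indicator {0..v} x *\<^sub>R x \<partial>lborel) = v\<^sup>2 / 2" by simp
qed

lemma neg_mult_ln_le:
  fixes y c :: real
  assumes "0 \<le> y" and "0 < c"
  shows "- (y * ln y) \<le> c - y - y * ln c"
proof (cases "y = 0")
  case False
  with assms have y: "0 < y" by simp
  have "ln c - ln y = ln (c / y)" using assms y by (simp add: ln_div)
  also have "\<dots> \<le> c / y - 1" using assms y by (intro ln_le_minus_one) simp
  finally have "y * (ln c - ln y) \<le> y * (c / y - 1)" using y by (intro mult_left_mono) auto
  then show ?thesis using y by (simp add: algebra_simps)
qed (use assms in simp)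

lemma support_bound_pos:
  fixes f :: "real \<Rightarrow> real" and \<nu> :: real
  assumes "\<And>x. x \<notin> {0..\<nu>} \<Longrightarrow> f x = 0" and "dens_mean f \<noteq> 0"
  shows "0 < \<nu>"
proof (rule ccontr)
  assume "\<not> 0 < \<nu>"
  then have "(\<lambda>x. x * f x) = (\<lambda>x. 0)"
    using assms(1) by (force simp: fun_eq_iff)
  then show False using assms(2) by (simp add: dens_mean_def)
qed

lemma weighted_entropy_le_Gibbs:
  fixes f :: "real \<Rightarrow> real" and \<nu> c :: real
  assumes nonneg: "\<And>x. 0 \<le> f x"
    and supp: "\<And>x. x \<notin> {0..\<nu>} \<Longrightarrow> f x = 0"
    and "0 \<le> \<nu>" and "0 < c"
    and mean_int: "integrable lborel (\<lambda>x. x * f x)"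
    and Hw_int: "integrable lborel (\<lambda>x. x * f x * ln (f x))"
  shows "weighted_entropy f \<le> c * \<nu>\<^sup>2 / 2 - dens_mean f * (1 + ln c)"
proof -
  have pointwise: "- (x * f x * ln (f x))
      \<le> c * (indicator {0..\<nu>} x *\<^sub>R x) - x * f x - ln c * (x * f x)" for x
  proof (cases "x \<in> {0..\<nu>}")
    case True
    then have "x * - (f x * ln (f x)) \<le> x * (c - f x - f x * ln c)"
      using neg_mult_ln_le[OF nonneg \<open>0 < c\<close>] by (intro mult_left_mono) auto
    then show ?thesis using True by (simp add: algebra_simps)
  qed (simp add: supp)
  have "weighted_entropy f
      \<le> (\<integral>x. c * (indicator {0..\<nu>} x *\<^sub>R x) - x * f x - ln c * (x * f x) \<partial>lborel)"
    unfolding weighted_entropy_def integral_minus[symmetric]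
    using Hw_int mean_int integrable_indicator_times_id[OF \<open>0 \<le> \<nu>\<close>] pointwise
    by (intro integral_mono) auto
  also have "\<dots> = c * (\<nu>\<^sup>2 / 2) - dens_mean f - ln c * dens_mean f"
    using mean_int integrable_indicator_times_id[OF \<open>0 \<le> \<nu>\<close>]
      integral_indicator_times_id[OF \<open>0 \<le> \<nu>\<close>]
    by (simp add: dens_mean_def)
  also have "\<dots> = c * \<nu>\<^sup>2 / 2 - dens_mean f * (1 + ln c)"
    by (simp add: algebra_simps)
  finally show ?thesis .
qed

lemma
  fixes f :: "real \<Rightarrow> real" and \<nu> :: real
  assumes "0 < \<nu>" and meas: "f \<in> borel_measurable lborel"
    and unif: "AE x in lborel. f x = indicator {0..\<nu>} x / \<nu>"
  shows dens_mean_uniform: "dens_mean f = \<nu> / 2"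
    and weighted_entropy_uniform: "weighted_entropy f = \<nu> / 2 * ln \<nu>"
proof -
  have half: "(\<integral>x. indicator {0..\<nu>} x *\<^sub>R x \<partial>lborel) = \<nu>\<^sup>2 / 2"
    using \<open>0 < \<nu>\<close> by (intro integral_indicator_times_id) simp
  have "dens_mean f = (\<integral>x. (1 / \<nu>) * (indicator {0..\<nu>} x *\<^sub>R x) \<partial>lborel)"
    unfolding dens_mean_def using meas
    by (intro integral_cong_AE) (use unif in \<open>auto elim!: eventually_mono simp: indicator_def\<close>)
  also have "\<dots> = \<nu> / 2"
    using \<open>0 < \<nu>\<close> by (simp only: integral_mult_right_zero half) (simp add: power2_eq_square)
  finally show "dens_mean f = \<nu> / 2" .
  have "weighted_entropy f = - (\<integral>x. (ln (1 / \<nu>) / \<nu>) * (indicator {0..\<nu>} x *\<^sub>R x) \<partial>lborel)"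
    unfolding weighted_entropy_def using meas
    by (subst integral_cong_AE) (use unif in \<open>auto elim!: eventually_mono simp: indicator_def\<close>)
  also have "\<dots> = \<nu> / 2 * ln \<nu>"
    using \<open>0 < \<nu>\<close> by (simp only: integral_mult_right_zero half) (simp add: power2_eq_square ln_div)
  finally show "weighted_entropy f = \<nu> / 2 * ln \<nu>" .
qed

theorem mainTheorem2:
  fixes f :: "real \<Rightarrow> real" and \<nu> :: real
  assumes dens: "is_density f"
    and supp: "\<And>x. x \<notin> {0..\<nu>} \<Longrightarrow> f x = 0"
    and mean_int: "integrable lborel (\<lambda>x. x * f x)"
    and mean_pos: "dens_mean f > 0"
    and Hw_int: "integrable lborel (\<lambda>x. x * f x * ln (f x))"
  shows "weighted_entropy f \<le> dens_mean f * ln (\<nu>\<^sup>2 / (2 * dens_mean f)) \<and>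
         ((AE x in lborel. f x = indicator {0..\<nu>} x / \<nu>) \<longrightarrow>
           weighted_entropy f = dens_mean f * ln (\<nu>\<^sup>2 / (2 * dens_mean f)))"
proof -
  define \<mu> where "\<mu> = dens_mean f"
  have "0 < \<nu>" using support_bound_pos[OF supp] mean_pos by simp
  have "0 < \<mu>" using mean_pos by (simp add: \<mu>_def)
  have nonneg: "\<And>x. 0 \<le> f x" and meas: "f \<in> borel_measurable lborel"
    using dens by (auto simp: is_density_def)
  define c where "c = 2 * \<mu> / \<nu>\<^sup>2"
  have "0 < c" using \<open>0 < \<mu>\<close> \<open>0 < \<nu>\<close> by (simp add: c_def)
  have "weighted_entropy f \<le> c * \<nu>\<^sup>2 / 2 - \<mu> * (1 + ln c)"
    unfolding \<mu>_def
    by (rule weighted_entropy_le_Gibbs[OF nonneg supp less_imp_le[OF \<open>0 < \<nu>\<close>] \<open>0 < c\<close>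
          mean_int Hw_int])
  also have "\<dots> = \<mu> * ln (\<nu>\<^sup>2 / (2 * \<mu>))"
    using \<open>0 < \<mu>\<close> \<open>0 < \<nu>\<close> by (simp add: c_def ln_div field_simps)
  finally have bound: "weighted_entropy f \<le> \<mu> * ln (\<nu>\<^sup>2 / (2 * \<mu>))" .
  have "weighted_entropy f = \<mu> * ln (\<nu>\<^sup>2 / (2 * \<mu>))"
    if unif: "AE x in lborel. f x = indicator {0..\<nu>} x / \<nu>"
  proof -
    have "\<mu> = \<nu> / 2" using dens_mean_uniform[OF \<open>0 < \<nu>\<close> meas unif] by (simp add: \<mu>_def)
    moreover have "\<nu>\<^sup>2 / (2 * (\<nu> / 2)) = \<nu>"
      using \<open>0 < \<nu>\<close> by (simp add: power2_eq_square)
    ultimately show ?thesis using weighted_entropy_uniform[OF \<open>0 < \<nu>\<close> meas unif] by (simp only:)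
  qed
  with bound show ?thesis unfolding \<mu>_def by blast
qed

end
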